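(* Let $M\in\mathbb N$ and let $X(M)$ be the subshift defined below. For $n\ge1$, the number $p_n(X(M))$ of $n$-periodic points of $X(M)$ is $$(2M+1)^n+(M+2)^n-\sum_{i=0}^{n/2}\binom{n}{i}2^i\left(M^i+M^{n-i}\right)+\binom{n}{n/2}(2M)^{n/2}\quad\text{if } n \text{ is even},$$ $$(2M+1)^n+(M+2)^n-\sum_{i=0}^{(n-1)/2}\binom{n}{i}2^i\left(M^i+M^{n-i}\right)\quad\text{if } n \text{ is odd}.$$
   Context: Let $\Sigma_1=\{\lambda,\xi,\rho_1,\dots,\rho_M,\eta_1,\dots,\eta_M\}$. $\mathcal M_1(M)$ is the monoid with zero generated by $\Sigma_1$ and an identity $\mathbf 1$, subject only to the relations $\lambda\rho_i=\mathbf 1$, $\lambda\eta_i=0$, $\xi\eta_i=\mathbf 1$, $\xi\rho_i=0$ ($1\le i\le M$), $\mathbf 1$ is the identity and $0$ is absorbing; no other relations. $\mathit{red}:\Sigma_1^*\to\mathcal M_1(M)$ sends a word to the product of its letters (empty word to $\mathbf 1$). $X(M)=\{x\in\Sigma_1^{\mathbb Z}:\mathit{red}(x_i\cdots x_j)\neq 0\ \forall i\le j\}$ with shift $\sigma$, and $p_n(X(M))=\#\{x\in X(M):\sigma^nx=x\}$. *)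

theory Defs
  imports Main
begin

datatype sym = Lam | Xi | Rho nat | Eta nat

definition Sigma1 :: "nat \<Rightarrow> sym set" where
  "Sigma1 M = {Lam, Xi} \<union> {Rho i | i. 1 \<le> i \<and> i \<le> M} \<union> {Eta i | i. 1 \<le> i \<and> i \<le> M}"

text \<open>The free monoid with zero over sym: Some w is the word w, None is the zero.\<close>
fun fmul :: "sym list option \<Rightarrow> sym list option \<Rightarrow> sym list option" where
  "fmul (Some a) (Some b) = Some (a @ b)"
| "fmul _ _ = None"

text \<open>The monoid congruence generated by the defining relations of M_1(M).\<close>
inductive_set mcong :: "nat \<Rightarrow> (sym list option \<times> sym list option) set" for M :: nat where
  rel_lr: "1 \<le> i \<Longrightarrow> i \<le> M \<Longrightarrow> (Some [Lam, Rho i], Some []) \<in> mcong M"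
| rel_le: "1 \<le> i \<Longrightarrow> i \<le> M \<Longrightarrow> (Some [Lam, Eta i], None) \<in> mcong M"
| rel_xe: "1 \<le> i \<Longrightarrow> i \<le> M \<Longrightarrow> (Some [Xi, Eta i], Some []) \<in> mcong M"
| rel_xr: "1 \<le> i \<Longrightarrow> i \<le> M \<Longrightarrow> (Some [Xi, Rho i], None) \<in> mcong M"
| refl: "(a, a) \<in> mcong M"
| sym: "(a, b) \<in> mcong M \<Longrightarrow> (b, a) \<in> mcong M"
| trans: "(a, b) \<in> mcong M \<Longrightarrow> (b, c) \<in> mcong M \<Longrightarrow> (a, c) \<in> mcong M"
| compat: "(a, b) \<in> mcong M \<Longrightarrow> (fmul c (fmul a d), fmul c (fmul b d)) \<in> mcong M"

definition red_is_zero :: "nat \<Rightarrow> sym list \<Rightarrow> bool" where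
  "red_is_zero M w \<longleftrightarrow> (Some w, None) \<in> mcong M"

definition XM :: "nat \<Rightarrow> (int \<Rightarrow> sym) set" where
  "XM M = {x. (\<forall>k. x k \<in> Sigma1 M) \<and>
              (\<forall>i j. i \<le> j \<longrightarrow> \<not> red_is_zero M (map x [i..j]))}"

definition periodic_points :: "nat \<Rightarrow> nat \<Rightarrow> nat" where
  "periodic_points M n = card {x \<in> XM M. (\<lambda>k. x (k + int n)) = x}"

end

theory Submission
  imports Defs "HOL-Library.Periodic_Fun"
begin

text \<open>A point of period \<open>n\<close> is the periodic extension of a word \<open>w\<close> of length \<open>n\<close>,
  and it lies in \<open>X(M)\<close> iff no power of \<open>w\<close> reduces to zero. Zero is detected by a
  stack reduction: an opening letter (\<lambda> or \<xi>) followed by a closing one (\<rho>_i or \<eta>_i)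
  cancels if the two are of the same kind and gives zero otherwise, and no other pair of
  letters interacts. So a word with letters of only one of the two sorts is always admissible,
  while otherwise a cyclic rotation of \<open>w\<close> begins with an opening letter followed by a
  closing one; these must cancel, which leaves \<open>2M\<close> choices for the pair and an admissible
  cycle of length \<open>n - 2\<close>. Hence a pattern of \<open>k\<close> opening and \<open>n - k\<close> closing positions
  carries \<open>2 ^ max k (n - k) * M ^ (n - k)\<close> admissible cycles. Summing over the patterns
  and splitting the binomial sum at \<open>k = n/2\<close> gives the closed form.\<close>

section \<open>Lists and binomial sums\<close>

lemma map_eq_replicate_iff: "map f xs = replicate n c \<longleftrightarrow> length xs = n \<and> (\<forall>x\<in>set xs. f x = c)"
  by (induction xs arbitrary: n) (fastforce simp: Cons_replicate_eq)+

lemma length_filter_rotate: "length (filter f (rotate k xs)) = length (filter f xs)"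
proof -
  have "length (filter f (rotate1 xs)) = length (filter f xs)" for xs
    by (cases xs) simp_all
  then show ?thesis
    by (induction k) simp_all
qed

lemma cyclic_True_before_False:
  assumes "True \<in> set P" "False \<in> set P"
  shows "\<exists>i<length P. P ! i \<and> \<not> P ! (Suc i mod length P)"
proof (rule ccontr)
  let ?n = "length P"
  assume "\<not> ?thesis"
  then have succ: "P ! (Suc i mod ?n)" if "i < ?n" "P ! i" for i
    using that by blast
  obtain i where i: "i < ?n" "P ! i"
    using assms(1) by (metis in_set_conv_nth)
  have all: "P ! ((i + d) mod ?n)" for d
  proof (induction d)
    case (Suc d)
    moreover have "(i + d) mod ?n < ?n"
      using i(1) by (intro mod_less_divisor) linarith
    ultimately show ?case
      using succ[of "(i + d) mod ?n"] by (simp add: mod_Suc_eq)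
  qed (use i in simp)
  have "P ! j" if "j < ?n" for j
  proof -
    have "i + (j + ?n - i) = j + ?n"
      using i(1) by linarith
    then show ?thesis
      using all[of "j + ?n - i"] that by simp
  qed
  with assms(2) show False
    by (metis in_set_conv_nth)
qed

lemma rotate_to_True_False:
  assumes "True \<in> set P" "False \<in> set P"
  shows "\<exists>k Q. rotate k P = True # False # Q"
proof -
  obtain i where i: "i < length P" "P ! i" "\<not> P ! (Suc i mod length P)"
    using cyclic_True_before_False[OF assms] by blast
  then have "length P \<noteq> 1"
    by auto
  with i(1) have "0 < length P" "1 < length P" "Suc (Suc 0) \<le> length (rotate i P)"
    by auto
  then obtain a b Q where R: "rotate i P = a # b # Q"
    unfolding Suc_le_length_iff by blast
  have "a = rotate i P ! 0" "b = rotate i P ! 1"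
    by (simp_all add: R)
  with i \<open>0 < length P\<close> \<open>1 < length P\<close> have "a = True" "b = False"
    by (simp_all add: nth_rotate)
  with R show ?thesis
    by blast
qed

lemma card_bool_lists_count_True:
  "card {P. length P = n \<and> length (filter id P) = k} = n choose k"
proof -
  have "bij_betw (\<lambda>P. {i. i < n \<and> P ! i})
      {P. length P = n \<and> length (filter id P) = k} {A. A \<subseteq> {..<n} \<and> card A = k}"
  proof (rule bij_betw_byWitness[where f' = "\<lambda>A. map (\<lambda>i. i \<in> A) [0..<n]"])
    show "\<forall>P\<in>{P. length P = n \<and> length (filter id P) = k}.
        map (\<lambda>i. i \<in> {i. i < n \<and> P ! i}) [0..<n] = P"
      by (auto intro: nth_equalityI)
    show "\<forall>A\<in>{A. A \<subseteq> {..<n} \<and> card A = k}. {i. i < n \<and> map (\<lambda>i. i \<in> A) [0..<n] ! i} = A"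
      by auto
    show "(\<lambda>P. {i. i < n \<and> P ! i}) ` {P. length P = n \<and> length (filter id P) = k}
        \<subseteq> {A. A \<subseteq> {..<n} \<and> card A = k}"
      by (auto simp: length_filter_conv_card)
    have "{i. i < n \<and> map (\<lambda>i. i \<in> A) [0..<n] ! i} = A" if "A \<subseteq> {..<n}" for A
      using that by auto
    then show "(\<lambda>A. map (\<lambda>i. i \<in> A) [0..<n]) ` {A. A \<subseteq> {..<n} \<and> card A = k}
        \<subseteq> {P. length P = n \<and> length (filter id P) = k}"
      by (auto simp: length_filter_conv_card)
  qed
  then show ?thesis
    by (simp add: bij_betw_same_card n_subsets)
qed

lemma sum_bool_lists_count_True:
  "(\<Sum>P | length P = n. f (length (filter id P))) = (\<Sum>k\<le>n. of_nat (n choose k) * f k)"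
proof -
  have "(\<Sum>P | length P = n. f (length (filter id P))) =
      (\<Sum>k\<le>n. \<Sum>P | length P = n \<and> length (filter id P) = k. f (length (filter id P)))"
    using finite_lists_length_eq[of "UNIV :: bool set" n]
    by (subst sum.group[symmetric, where g = "\<lambda>P. length (filter id P)" and T = "{..n}"])
      (auto simp: Collect_conj_eq[symmetric] intro: order.trans[OF length_filter_le])
  also have "\<dots> = (\<Sum>k\<le>n. of_nat (n choose k) * f k)"
    by (rule sum.cong) (simp_all add: card_bool_lists_count_True[symmetric])
  finally show ?thesis .
qed

lemma sum_atMost_lower_half:
  fixes n :: nat
  shows "(\<Sum>k\<le>n. if 2 * k \<le> n then f k else 0) = (\<Sum>k = 0..n div 2. f k)"
proof -
  have "{k \<in> {..n}. 2 * k \<le> n} = {0..n div 2}"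
    by auto
  then show ?thesis
    by (simp flip: sum.inter_filter)
qed

lemma sum_atMost_upper_half:
  fixes n :: nat
  shows "(\<Sum>k\<le>n. if n \<le> 2 * k then f (n - k) else 0) = (\<Sum>i = 0..n div 2. f i)"
proof -
  have "(\<Sum>k\<le>n. if n \<le> 2 * k then f (n - k) else 0) = (\<Sum>k \<in> {k \<in> {..n}. n \<le> 2 * k}. f (n - k))"
    by (rule sum.inter_filter[symmetric]) simp
  also have "\<dots> = (\<Sum>i = 0..n div 2. f i)"
    by (rule sum.reindex_bij_witness[of _ "\<lambda>i. n - i" "\<lambda>k. n - k"]) auto
  finally show ?thesis .
qed

lemma sum_atMost_middle:
  fixes n :: nat
  shows "(\<Sum>k\<le>n. if 2 * k = n then f k else 0) = (if even n then f (n div 2) else 0)"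
proof -
  have "2 * k = n \<longleftrightarrow> even n \<and> k = n div 2" for k
    by auto
  then show ?thesis
    by (cases "even n") simp_all
qed

lemma sum_binomial_power_max:
  fixes m :: "'a :: comm_ring_1"
  shows "(\<Sum>k\<le>n. of_nat (n choose k) * (2 ^ max k (n - k) * m ^ (n - k))) =
    (2 * m + 1) ^ n + (m + 2) ^ n
    - (\<Sum>i = 0..n div 2. of_nat (n choose i) * 2 ^ i * (m ^ i + m ^ (n - i)))
    + (if even n then of_nat (n choose (n div 2)) * (2 * m) ^ (n div 2) else 0)"
proof -
  define a where "a k = of_nat (n choose k) * (2 * m) ^ (n - k)" for k
  define b where "b k = of_nat (n choose k) * 2 ^ k * m ^ (n - k)" for k
  have termwise: "of_nat (n choose k) * (2 ^ max k (n - k) * m ^ (n - k)) =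
      a k + b k - (if n \<le> 2 * k then a k else 0) - (if 2 * k \<le> n then b k else 0)
      + (if 2 * k = n then a k else 0)" for k
  proof -
    consider "2 * k < n" | "n < 2 * k" | "2 * k = n"
      by linarith
    then show ?thesis
    proof cases
      case 1
      then have "max k (n - k) = n - k"
        by linarith
      with 1 show ?thesis
        by (simp add: a_def b_def power_mult_distrib)
    next
      case 2
      then have "max k (n - k) = k"
        by linarith
      with 2 show ?thesis
        by (simp add: a_def b_def)
    next
      case 3
      then have "max k (n - k) = k" "n - k = k"
        by linarith+
      with 3 show ?thesis
        by (simp add: a_def b_def power_mult_distrib)
    qed
  qed
  have "(2 * m + 1) ^ n = (\<Sum>k\<le>n. a k)"
    using binomial_ring[of 1 "2 * m" n] by (simp add: a_def add.commute)
  moreover have "(m + 2) ^ n = (\<Sum>k\<le>n. b k)"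
    using binomial_ring[of 2 m n] by (simp add: b_def add.commute mult.assoc)
  moreover have "(\<Sum>k\<le>n. if n \<le> 2 * k then a k else 0) =
      (\<Sum>i = 0..n div 2. of_nat (n choose i) * 2 ^ i * m ^ i)"
  proof -
    have "(\<Sum>k\<le>n. if n \<le> 2 * k then a k else 0) =
        (\<Sum>k\<le>n. if n \<le> 2 * k then of_nat (n choose (n - k)) * (2 * m) ^ (n - k) else 0)"
      by (rule sum.cong) (simp_all add: a_def binomial_symmetric[symmetric])
    then show ?thesis
      using sum_atMost_upper_half[where f = "\<lambda>i. of_nat (n choose i) * (2 * m) ^ i"]
      by (simp add: power_mult_distrib mult.assoc)
  qed
  moreover have "(\<Sum>k\<le>n. if 2 * k \<le> n then b k else 0) =
      (\<Sum>i = 0..n div 2. of_nat (n choose i) * 2 ^ i * m ^ (n - i))"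
    by (simp add: sum_atMost_lower_half b_def)
  moreover have "(\<Sum>k\<le>n. if 2 * k = n then a k else 0) =
      (if even n then of_nat (n choose (n div 2)) * (2 * m) ^ (n div 2) else 0)"
    by (auto simp: sum_atMost_middle a_def elim!: evenE)
  ultimately show ?thesis
    by (simp add: termwise sum.distrib sum_subtractf distrib_left)
qed

section \<open>Periodic extension of a word\<close>

lemma upto_add_right: "[i + c..j + c] = map (\<lambda>k. k + c) [i..j]"
  by (rule nth_equalityI) simp_all

definition periodic_extension :: "'a list \<Rightarrow> int \<Rightarrow> 'a" where
  "periodic_extension w k = w ! nat (k mod int (length w))"

lemma periodic_extension_add_multiple:
  "periodic_extension w (k + a * int (length w)) = periodic_extension w k"
  by (simp add: periodic_extension_def)

lemma periodic_extension_of_nat: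
  "k < length w \<Longrightarrow> periodic_extension w (int k) = w ! k"
  by (simp add: periodic_extension_def zmod_int)

lemma periodic_extension_in_set: "w \<noteq> [] \<Longrightarrow> periodic_extension w k \<in> set w"
  unfolding periodic_extension_def
  by (rule nth_mem) (simp add: nat_less_iff)

lemma map_periodic_extension_upto:
  assumes "w \<noteq> []"
  shows "map (periodic_extension w) [a * int (length w)..a * int (length w) + int (length w) - 1] = w"
proof -
  have "[a * int (length w)..a * int (length w) + int (length w) - 1] =
      map (\<lambda>k. k + a * int (length w)) [0..int (length w) - 1]"
    using upto_add_right[of 0 "a * int (length w)" "int (length w) - 1"]
    by (simp add: algebra_simps)
  moreover have "map (periodic_extension w) [0..int (length w) - 1] = w"
    by (rule nth_equalityI) (simp_all add: periodic_extension_of_nat)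
  ultimately show ?thesis
    by (simp add: periodic_extension_add_multiple comp_def)
qed

lemma concat_replicate_eq_periodic_extension:
  assumes "w \<noteq> []"
  shows "concat (replicate m w) = map (periodic_extension w) [0..int m * int (length w) - 1]"
proof (induction m)
  case (Suc m)
  have "[0..int (Suc m) * int (length w) - 1] =
      [0..int m * int (length w) - 1] @ [int m * int (length w)..int (Suc m) * int (length w) - 1]"
    using assms by (intro upto_split1) (simp_all add: algebra_simps Suc_le_eq)
  then show ?case
    using Suc map_periodic_extension_upto[OF assms, of "int m"]
    by (simp add: replicate_append_same[symmetric] algebra_simps)
qed simp

lemma periodic_extension_infix_of_power:
  assumes "w \<noteq> []" "i \<le> j"
  shows "\<exists>m u v. concat (replicate m w) = u @ map (periodic_extension w) [i..j] @ v"
proof -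
  define n where "n = int (length w)"
  define d where "d = i div n"
  define r where "r = i mod n"
  define m where "m = nat (j - d * n) + 1"
  have n: "1 \<le> n" and r: "0 \<le> r" and i: "i = r + d * n"
    using assms(1) by (simp_all add: n_def r_def d_def Suc_le_eq)
  have "0 \<le> j - d * n"
    using assms(2) i r by linarith
  then have "int m = j - d * n + 1"
    by (simp add: m_def)
  moreover have "int m \<le> int m * n"
    using mult_left_mono[OF n, of "int m"] by simp
  ultimately have "j - d * n \<le> int m * n - 1"
    by linarith
  with r i assms(2)
  have "[0..int m * n - 1] = [0..r - 1] @ [r..j - d * n] @ [j - d * n + 1..int m * n - 1]"
    by (simp add: upto_split1 upto_split2)
  moreover have "map (periodic_extension w) [i..j] = map (periodic_extension w) [r..j - d * n]"
    using upto_add_right[of r "d * n" "j - d * n"] i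
    by (simp add: n_def periodic_extension_add_multiple)
  ultimately have "concat (replicate m w) = map (periodic_extension w) [0..r - 1] @
      map (periodic_extension w) [i..j] @ map (periodic_extension w) [j - d * n + 1..int m * n - 1]"
    using concat_replicate_eq_periodic_extension[OF assms(1), of m] by (simp add: n_def)
  then show ?thesis
    by blast
qed

lemma periodic_extension_restrict:
  assumes "0 < n" and periodic: "(\<lambda>k. x (k + int n)) = x"
  shows "periodic_extension (map (\<lambda>k. x (int k)) [0..<n]) = x"
proof
  fix k
  interpret periodic_fun_simple x "int n"
    by unfold_locales (metis periodic)
  have "nat (k mod int n) < n"
    using assms(1) by (simp add: nat_less_iff)
  then have "periodic_extension (map (\<lambda>k. x (int k)) [0..<n]) k = x (k mod int n)"
    using assms(1) by (simp add: periodic_extension_def)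
  also have "\<dots> = x (k mod int n + of_int (k div int n) * int n)"
    by (rule plus_of_int[symmetric])
  also have "\<dots> = x k"
    by simp
  finally show "periodic_extension (map (\<lambda>k. x (int k)) [0..<n]) k = x k" .
qed

lemma restrict_periodic_extension: "map (\<lambda>k. periodic_extension w (int k)) [0..<length w] = w"
  by (rule nth_equalityI) (simp_all add: periodic_extension_of_nat)

section \<open>Deciding zero in the monoid by reduction\<close>

fun is_opening :: "sym \<Rightarrow> bool" where
  "is_opening Lam = True"
| "is_opening Xi = True"
| "is_opening _ = False"

fun is_closing :: "nat \<Rightarrow> sym \<Rightarrow> bool" where
  "is_closing M (Rho i) \<longleftrightarrow> 1 \<le> i \<and> i \<le> M"
| "is_closing M (Eta i) \<longleftrightarrow> 1 \<le> i \<and> i \<le> M"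
| "is_closing M _ = False"

fun same_kind :: "sym \<Rightarrow> sym \<Rightarrow> bool" where
  "same_kind Lam (Rho _) = True"
| "same_kind Xi (Eta _) = True"
| "same_kind _ _ = False"

lemma Sigma1_iff: "a \<in> Sigma1 M \<longleftrightarrow> is_opening a \<or> is_closing M a"
  unfolding Sigma1_def by (cases a) auto

lemma finite_Sigma1: "finite (Sigma1 M)"
  unfolding Sigma1_def by auto

text \<open>The state is the reduced form of the prefix read so far, stored in reverse (so its
  head is the last letter), or \<open>None\<close> once it is zero.\<close>
fun reduce_step :: "nat \<Rightarrow> sym \<Rightarrow> sym list option \<Rightarrow> sym list option" where
  "reduce_step M a None = None"
| "reduce_step M a (Some []) = Some [a]"
| "reduce_step M a (Some (b # st)) =
     (if is_opening b \<and> is_closing M a then (if same_kind b a then Some st else None)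
      else Some (a # b # st))"

definition reduce :: "nat \<Rightarrow> sym list option \<Rightarrow> sym list \<Rightarrow> sym list option" where
  "reduce M s w = fold (reduce_step M) w s"

lemma reduce_Nil [simp]: "reduce M s [] = s"
  by (simp add: reduce_def)

lemma reduce_Cons: "reduce M s (a # w) = reduce M (reduce_step M a s) w"
  by (simp add: reduce_def)

lemma reduce_append: "reduce M s (u @ v) = reduce M (reduce M s u) v"
  by (simp add: reduce_def)

lemma reduce_None [simp]: "reduce M None w = None"
  by (induction w) (simp_all add: reduce_Cons)

lemma reduce_step_not_closing: "\<not> is_closing M a \<Longrightarrow> reduce_step M a (Some st) = Some (a # st)"
  by (cases st) auto

lemma reduce_opening_closing:
  "is_opening a \<Longrightarrow> is_closing M b \<Longrightarrow>
     reduce M s (a # b # w) = (if same_kind a b then reduce M s w else None)"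
  by (cases s) (auto simp: reduce_Cons reduce_step_not_closing elim: is_opening.elims)

fun reduce_elem :: "nat \<Rightarrow> sym list option \<Rightarrow> sym list option \<Rightarrow> sym list option" where
  "reduce_elem M s None = None"
| "reduce_elem M s (Some w) = reduce M s w"

lemma reduce_elem_fmul: "reduce_elem M s (fmul c d) = reduce_elem M (reduce_elem M s c) d"
  by (cases c; cases d) (auto simp: reduce_append)

lemma reduce_elem_mcong: "(u, v) \<in> mcong M \<Longrightarrow> reduce_elem M s u = reduce_elem M s v"
proof (induction arbitrary: s rule: mcong.induct)
  case (compat a b c d)
  then show ?case
    by (simp add: reduce_elem_fmul)
qed (auto simp: reduce_opening_closing)

lemma mcong_opening_closing:
  assumes "is_opening a" "is_closing M b"
  shows "(Some [a, b], if same_kind a b then Some [] else None) \<in> mcong M"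
  using assms by (cases a; cases b) (auto intro: mcong.intros)

lemma mcong_compat_word:
  "(Some u, v) \<in> mcong M \<Longrightarrow> (Some (x @ u @ y), fmul (Some x) (fmul v (Some y))) \<in> mcong M"
  using mcong.compat[of "Some u" v M "Some x" "Some y"] by simp

lemma mcong_zero_if_reduce_None:
  "reduce M (Some st) w = None \<Longrightarrow> (Some (rev st @ w), None) \<in> mcong M"
proof (induction w arbitrary: st)
  case (Cons a w)
  show ?case
  proof (cases "\<exists>b t. st = b # t \<and> is_opening b \<and> is_closing M a")
    case True
    then obtain b t where st: "st = b # t" and b: "is_opening b" and a: "is_closing M a" 
      by blast
    have pair: "(Some (rev t @ [b, a] @ w),
        fmul (Some (rev t)) (fmul (if same_kind b a then Some [] else None) (Some w))) \<in> mcong M"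
      by (rule mcong_compat_word[OF mcong_opening_closing[OF b a]])
    show ?thesis
    proof (cases "same_kind b a")
      case True
      with Cons.prems st b a have "(Some (rev t @ w), None) \<in> mcong M"
        by (intro Cons.IH) (simp add: reduce_Cons)
      with pair True st show ?thesis
        by (auto intro: mcong.trans)
    next
      case False
      with pair st show ?thesis
        by simp
    qed
  next
    case False
    then have "reduce_step M a (Some st) = Some (a # st)"
      by (cases st) auto
    with Cons.prems have "(Some (rev (a # st) @ w), None) \<in> mcong M"
      by (intro Cons.IH) (simp add: reduce_Cons)
    then show ?thesis
      by simp
  qed
qed simp

lemma red_is_zero_iff_reduce: "red_is_zero M w \<longleftrightarrow> reduce M (Some []) w = None"
  using reduce_elem_mcong[of "Some w" None M "Some []"] mcong_zero_if_reduce_None[of M "[]" w]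
  unfolding red_is_zero_def by auto

lemma red_is_zero_infix: "red_is_zero M u \<Longrightarrow> red_is_zero M (x @ u @ y)"
  unfolding red_is_zero_def using mcong_compat_word[of u None M x y] by simp

lemma not_red_is_zero_Nil: "\<not> red_is_zero M []"
  by (simp add: red_is_zero_iff_reduce)

section \<open>Periodic points as admissible cycles\<close>

definition admissible_cycle :: "nat \<Rightarrow> sym list \<Rightarrow> bool" where
  "admissible_cycle M w \<longleftrightarrow> (\<forall>m. \<not> red_is_zero M (concat (replicate m w)))"

lemma admissible_cycle_swap:
  assumes "admissible_cycle M (x @ y)"
  shows "admissible_cycle M (y @ x)"
  unfolding admissible_cycle_def
proof (intro allI notI)
  fix m
  have "concat (replicate (Suc m) (x @ y)) = x @ concat (replicate m (y @ x)) @ y"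
    by (induction m) simp_all
  moreover assume "red_is_zero M (concat (replicate m (y @ x)))"
  ultimately have "red_is_zero M (concat (replicate (Suc m) (x @ y)))"
    by (simp add: red_is_zero_infix)
  with assms show False
    unfolding admissible_cycle_def by blast
qed

lemma admissible_cycle_rotate: "admissible_cycle M (rotate k w) \<longleftrightarrow> admissible_cycle M w"
proof -
  have "admissible_cycle M (rotate1 w) \<longleftrightarrow> admissible_cycle M w" for w
    using admissible_cycle_swap[of M "[hd w]" "tl w"] admissible_cycle_swap[of M "tl w" "[hd w]"]
    by (cases w) auto
  then show ?thesis
    by (induction k) simp_all
qed

lemma admissible_cycle_iff_reduce:
  "admissible_cycle M w \<longleftrightarrow> (\<forall>m. reduce M (Some []) (concat (replicate m w)) \<noteq> None)"
  by (simp add: admissible_cycle_def red_is_zero_iff_reduce)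

lemma admissible_cycle_opening_closing:
  assumes "is_opening a" "is_closing M b"
  shows "admissible_cycle M (a # b # u) \<longleftrightarrow> same_kind a b \<and> admissible_cycle M u"
proof (cases "same_kind a b")
  case True
  have "reduce M s (concat (replicate m (a # b # u))) = reduce M s (concat (replicate m u))" for s m
    by (induction m arbitrary: s) (simp_all add: reduce_append reduce_opening_closing[OF assms] True)
  with True show ?thesis
    by (simp add: admissible_cycle_iff_reduce)
next
  case False
  then have "reduce M (Some []) (concat (replicate 1 (a # b # u))) = None"
    by (simp add: reduce_opening_closing[OF assms])
  with False show ?thesis
    unfolding admissible_cycle_iff_reduce by blast
qed

lemma admissible_cycle_no_closing:
  assumes "\<forall>a\<in>set w. \<not> is_closing M a"
  shows "admissible_cycle M w"
proof -
  have "reduce M (Some st) v \<noteq> None" if "\<forall>a\<in>set v. \<not> is_closing M a" for st v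
    using that by (induction v arbitrary: st) (simp_all add: reduce_Cons reduce_step_not_closing)
  with assms show ?thesis
    by (simp add: admissible_cycle_iff_reduce)
qed

lemma admissible_cycle_no_opening:
  assumes "\<forall>a\<in>set w. \<not> is_opening a"
  shows "admissible_cycle M w"
proof -
  have "reduce M (Some st) v \<noteq> None"
    if "\<forall>a\<in>set v. \<not> is_opening a" "\<forall>b\<in>set st. \<not> is_opening b" for st v
    using that
  proof (induction v arbitrary: st)
    case (Cons a v)
    then have "reduce_step M a (Some st) = Some (a # st)"
      by (cases st) auto
    with Cons show ?case
      by (simp add: reduce_Cons)
  qed simp
  with assms show ?thesis
    by (simp add: admissible_cycle_iff_reduce)
qed

lemma admissible_cycle_iff_periodic_extension:
  assumes "w \<noteq> []"
  shows "admissible_cycle M w \<longleftrightarrow>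
    (\<forall>i j. i \<le> j \<longrightarrow> \<not> red_is_zero M (map (periodic_extension w) [i..j]))"
proof
  assume "admissible_cycle M w"
  then show "\<forall>i j. i \<le> j \<longrightarrow> \<not> red_is_zero M (map (periodic_extension w) [i..j])"
    using periodic_extension_infix_of_power[OF assms] red_is_zero_infix
    unfolding admissible_cycle_def by metis
next
  assume subwords: "\<forall>i j. i \<le> j \<longrightarrow> \<not> red_is_zero M (map (periodic_extension w) [i..j])"
  show "admissible_cycle M w"
    unfolding admissible_cycle_def
  proof
    fix m
    show "\<not> red_is_zero M (concat (replicate m w))"
    proof (cases m)
      case (Suc m')
      with assms have "0 \<le> int m * int (length w) - 1"
        by (simp add: Suc_le_eq)
      with subwords show ?thesis
        by (simp add: concat_replicate_eq_periodic_extension[OF assms])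
    qed (simp add: not_red_is_zero_Nil)
  qed
qed

lemma periodic_extension_in_XM_iff:
  assumes "w \<noteq> []"
  shows "periodic_extension w \<in> XM M \<longleftrightarrow> set w \<subseteq> Sigma1 M \<and> admissible_cycle M w"
proof -
  have "(\<forall>k. periodic_extension w k \<in> Sigma1 M) \<longleftrightarrow> set w \<subseteq> Sigma1 M"
    using assms periodic_extension_in_set
    by (metis in_set_conv_nth periodic_extension_of_nat subset_iff)
  then show ?thesis
    by (simp add: XM_def admissible_cycle_iff_periodic_extension[OF assms])
qed

definition admissible_cycles :: "nat \<Rightarrow> nat \<Rightarrow> sym list set" where
  "admissible_cycles M n = {w. set w \<subseteq> Sigma1 M \<and> length w = n \<and> admissible_cycle M w}"

lemma periodic_points_eq_card_admissible_cycles: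
  assumes "1 \<le> n"
  shows "periodic_points M n = card (admissible_cycles M n)"
proof -
  let ?restrict = "\<lambda>x. map (\<lambda>k. x (int k)) [0..<n]"
  have "bij_betw ?restrict {x \<in> XM M. (\<lambda>k. x (k + int n)) = x} (admissible_cycles M n)"
  proof (rule bij_betw_byWitness[where f' = periodic_extension], safe)
    fix x
    assume "x \<in> XM M" and periodic: "(\<lambda>k. x (k + int n)) = x"
    from assms have "0 < n"
      by simp
    then show "periodic_extension (?restrict x) = x"
      using periodic by (rule periodic_extension_restrict)
    with \<open>x \<in> XM M\<close> show "?restrict x \<in> admissible_cycles M n"
      using assms periodic_extension_in_XM_iff[of "?restrict x" M]
      by (auto simp: admissible_cycles_def)
  next
    fix w
    assume w: "w \<in> admissible_cycles M n"
    then have "length w = n" "w \<noteq> []"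
      using assms by (auto simp: admissible_cycles_def)
    with w show "?restrict (periodic_extension w) = w" "periodic_extension w \<in> XM M"
        "(\<lambda>k. periodic_extension w (k + int n)) = periodic_extension w"
      using restrict_periodic_extension[of w] periodic_extension_add_multiple[of w _ 1]
      by (auto simp: admissible_cycles_def periodic_extension_in_XM_iff)
  qed
  then show ?thesis
    unfolding periodic_points_def by (rule bij_betw_same_card)
qed

section \<open>Counting admissible cycles\<close>

definition cycles_with_pattern :: "nat \<Rightarrow> bool list \<Rightarrow> sym list set" where
  "cycles_with_pattern M P =
     {w. set w \<subseteq> Sigma1 M \<and> map is_opening w = P \<and> admissible_cycle M w}"

lemma finite_cycles_with_pattern: "finite (cycles_with_pattern M P)"
proof (rule finite_subset)
  show "cycles_with_pattern M P \<subseteq> {w. set w \<subseteq> Sigma1 M \<and> length w = length P}"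
    unfolding cycles_with_pattern_def by auto
qed (rule finite_lists_length_eq[OF finite_Sigma1])

lemma card_cycles_with_pattern_rotate:
  "card (cycles_with_pattern M (rotate k P)) = card (cycles_with_pattern M P)"
proof -
  have "rotate1 ` cycles_with_pattern M P = cycles_with_pattern M (rotate1 P)" for P
  proof
    show "rotate1 ` cycles_with_pattern M P \<subseteq> cycles_with_pattern M (rotate1 P)"
      unfolding cycles_with_pattern_def
      using admissible_cycle_rotate[of M 1] by (auto simp: rotate1_map)
    show "cycles_with_pattern M (rotate1 P) \<subseteq> rotate1 ` cycles_with_pattern M P"
    proof
      fix w
      assume w: "w \<in> cycles_with_pattern M (rotate1 P)"
      obtain v where v: "w = rotate1 v"
        using surj_rotate1 by blast
      have "rotate1 (map is_opening v) = rotate1 P"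
        using w v by (simp add: cycles_with_pattern_def rotate1_map)
      then have "map is_opening v = P"
        by (rule injD[OF inj_rotate1])
      with w v admissible_cycle_rotate[of M 1 v] show "w \<in> rotate1 ` cycles_with_pattern M P"
        by (auto simp: cycles_with_pattern_def)
    qed
  qed
  then have "card (cycles_with_pattern M (rotate1 P)) = card (cycles_with_pattern M P)" for P
    using card_image[OF inj_on_subset[OF inj_rotate1]] by (metis subset_UNIV)
  then show ?thesis
    by (induction k) simp_all
qed

definition cancelling_pairs :: "nat \<Rightarrow> (sym \<times> sym) set" where
  "cancelling_pairs M = {(a, b). is_opening a \<and> is_closing M b \<and> same_kind a b}"

lemma cancelling_pairs_eq:
  "cancelling_pairs M = (\<lambda>i. (Lam, Rho i)) ` {1..M} \<union> (\<lambda>i. (Xi, Eta i)) ` {1..M}"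
  unfolding cancelling_pairs_def
  by (auto elim!: is_opening.elims is_closing.elims same_kind.elims)

lemma card_cancelling_pairs: "card (cancelling_pairs M) = 2 * M"
  unfolding cancelling_pairs_eq by (subst card_Un_disjoint) (auto simp: card_image inj_on_def)

lemma cycles_with_pattern_True_False:
  "cycles_with_pattern M (True # False # Q) =
     (\<lambda>((a, b), u). a # b # u) ` (cancelling_pairs M \<times> cycles_with_pattern M Q)"
proof (intro equalityI subsetI)
  fix w
  assume w: "w \<in> cycles_with_pattern M (True # False # Q)"
  then obtain a b u where w_eq: "w = a # b # u" and a: "is_opening a" and "\<not> is_opening b"
    by (auto simp: cycles_with_pattern_def map_eq_Cons_conv)
  with w have b: "is_closing M b"
    by (auto simp: cycles_with_pattern_def Sigma1_iff)
  with w w_eq a have "(a, b) \<in> cancelling_pairs M" "u \<in> cycles_with_pattern M Q"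
    by (auto simp: cycles_with_pattern_def cancelling_pairs_def admissible_cycle_opening_closing)
  with w_eq show "w \<in> (\<lambda>((a, b), u). a # b # u) ` (cancelling_pairs M \<times> cycles_with_pattern M Q)"
    by force
next
  fix w
  assume "w \<in> (\<lambda>((a, b), u). a # b # u) ` (cancelling_pairs M \<times> cycles_with_pattern M Q)"
  then obtain a b u where "w = a # b # u" "(a, b) \<in> cancelling_pairs M" "u \<in> cycles_with_pattern M Q"
    by auto
  moreover from this(2) have "\<not> is_opening b"
    by (auto simp: cancelling_pairs_def elim: is_closing.elims)
  ultimately show "w \<in> cycles_with_pattern M (True # False # Q)"
    by (auto simp: cycles_with_pattern_def cancelling_pairs_def Sigma1_iff
        admissible_cycle_opening_closing)
qed

lemma card_cycles_with_pattern_True_False: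
  "card (cycles_with_pattern M (True # False # Q)) = 2 * M * card (cycles_with_pattern M Q)"
proof -
  have "inj_on (\<lambda>((a, b), u). a # b # u) (cancelling_pairs M \<times> cycles_with_pattern M Q)"
    by (auto simp: inj_on_def)
  then show ?thesis
    by (simp add: cycles_with_pattern_True_False card_image card_cartesian_product
        card_cancelling_pairs)
qed

lemma card_cycles_with_pattern_all_True:
  "card (cycles_with_pattern M (replicate n True)) = 2 ^ n"
proof -
  have "is_opening a \<longleftrightarrow> a \<in> {Lam, Xi}" for a
    by (cases a) auto
  then have "cycles_with_pattern M (replicate n True) = {w. set w \<subseteq> {Lam, Xi} \<and> length w = n}"
    unfolding cycles_with_pattern_def map_eq_replicate_iff
    by (auto simp: Sigma1_iff intro!: admissible_cycle_no_closing)
  then show ?thesis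
    by (simp add: card_lists_length_eq numeral_2_eq_2)
qed

lemma card_cycles_with_pattern_all_False:
  "card (cycles_with_pattern M (replicate n False)) = (2 * M) ^ n"
proof -
  have closing: "{a. is_closing M a} = Rho ` {1..M} \<union> Eta ` {1..M}"
    by (auto elim: is_closing.elims)
  have "card {a. is_closing M a} = 2 * M"
    unfolding closing by (subst card_Un_disjoint) (auto simp: card_image inj_on_def)
  moreover have "\<not> is_opening a" if "is_closing M a" for a
    using that by (cases a) auto
  then have "cycles_with_pattern M (replicate n False) =
      {w. set w \<subseteq> {a. is_closing M a} \<and> length w = n}"
    unfolding cycles_with_pattern_def map_eq_replicate_iff
    by (auto simp: Sigma1_iff intro!: admissible_cycle_no_opening)
  ultimately show ?thesis
    by (simp add: card_lists_length_eq closing)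
qed

lemma card_cycles_with_pattern:
  "card (cycles_with_pattern M P) =
     2 ^ max (length (filter id P)) (length (filter Not P)) * M ^ length (filter Not P)"
proof (induction "length P" arbitrary: P rule: less_induct)
  case less
  show ?case
  proof (cases "True \<in> set P \<and> False \<in> set P")
    case True
    then obtain k Q where PQ: "rotate k P = True # False # Q"
      using rotate_to_True_False by blast
    then have "length P = Suc (Suc (length Q))"
      by (metis length_Cons length_rotate)
    then have "length Q < length P"
      by simp
    moreover have "length (filter f P) = length (filter f (True # False # Q))" for f
      by (simp flip: PQ add: length_filter_rotate)
    moreover have "card (cycles_with_pattern M P) = 2 * M * card (cycles_with_pattern M Q)"
      by (metis PQ card_cycles_with_pattern_rotate card_cycles_with_pattern_True_False)
    ultimately show ?thesis
      using less by simp
  next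
    case False
    then have "P = replicate (length P) True \<or> P = replicate (length P) False"
      by (metis (full_types) replicate_length_same)
    then obtain n b where "P = replicate n b"
      by blast
    then show ?thesis
      by (cases b) (simp_all add: card_cycles_with_pattern_all_True
          card_cycles_with_pattern_all_False filter_replicate power_mult_distrib)
  qed
qed

lemma card_admissible_cycles_eq_sum:
  "card (admissible_cycles M n) = (\<Sum>P | length P = n. card (cycles_with_pattern M P))"
proof -
  have "admissible_cycles M n = (\<Union>P \<in> {P. length P = n}. cycles_with_pattern M P)"
    unfolding admissible_cycles_def cycles_with_pattern_def by auto
  moreover have "cycles_with_pattern M P \<inter> cycles_with_pattern M Q = {}" if "P \<noteq> Q" for P Q
    using that by (auto simp: cycles_with_pattern_def)
  ultimately show ?thesis
    using finite_lists_length_eq[of "UNIV :: bool set" n]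
    by (simp add: card_UN_disjoint finite_cycles_with_pattern)
qed

lemma card_admissible_cycles:
  "card (admissible_cycles M n) = (\<Sum>k\<le>n. (n choose k) * (2 ^ max k (n - k) * M ^ (n - k)))"
proof -
  have "length (filter Not P) = length P - length (filter id P)" for P :: "bool list"
    using sum_length_filter_compl[of id P] by simp
  then have "card (admissible_cycles M n) =
      (\<Sum>P | length P = n. (\<lambda>k. 2 ^ max k (n - k) * M ^ (n - k)) (length (filter id P)))"
    by (simp add: card_admissible_cycles_eq_sum card_cycles_with_pattern)
  then show ?thesis
    using sum_bool_lists_count_True[where f = "\<lambda>k. 2 ^ max k (n - k) * M ^ (n - k)"] by simp
qed

theorem proposition3p3:
  fixes M n :: nat
  assumes "n \<ge> 1"
  shows "int (periodic_points M n) =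
     (if even n then
        (2 * int M + 1) ^ n + (int M + 2) ^ n
        - (\<Sum>i = 0..n div 2. int (n choose i) * 2 ^ i * (int M ^ i + int M ^ (n - i)))
        + int (n choose (n div 2)) * (2 * int M) ^ (n div 2)
      else
        (2 * int M + 1) ^ n + (int M + 2) ^ n
        - (\<Sum>i = 0..(n - 1) div 2. int (n choose i) * 2 ^ i * (int M ^ i + int M ^ (n - i))))"
proof -
  have "int (periodic_points M n) =
      (\<Sum>k\<le>n. int (n choose k) * (2 ^ max k (n - k) * int M ^ (n - k)))"
    by (simp add: periodic_points_eq_card_admissible_cycles[OF assms] card_admissible_cycles)
  also have "\<dots> = (2 * int M + 1) ^ n + (int M + 2) ^ n
      - (\<Sum>i = 0..n div 2. int (n choose i) * 2 ^ i * (int M ^ i + int M ^ (n - i)))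
      + (if even n then int (n choose (n div 2)) * (2 * int M) ^ (n div 2) else 0)"
    by (rule sum_binomial_power_max)
  moreover have "odd n \<Longrightarrow> (n - 1) div 2 = n div 2"
    by (elim oddE) simp
  ultimately show ?thesis
    by simp
qed

end
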